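(* Let $(a,b)$ and $(c,d)$ be arcs of the completed $\infty$-gon, identified with indecomposable objects of $\mathcal{C}_2$. Then \[ \mathrm{Hom}_R((a,b),(c,d))\cong\begin{cases}\mathbb{C}^2&\text{if }-\infty<a\le c\text{ and }b\le d,\\ 0&\text{if }-\infty=a\le c\text{ and }d<b,\\ 0&\text{if }d<a,\\ \mathbb{C}&\text{otherwise,}\end{cases} \] where $\mathrm{Hom}_R$ denotes degree-preserving homomorphisms of graded $R$-modules.
   Context: Let $R=\mathbb{C}[x,y]/(x^2)$, graded with $\deg x=1$, $\deg y=-1$; $M(j)_n=M_{j+n}$. $\mathcal{C}_2$ is the category of finitely generated $\mathbb{Z}$-graded maximal Cohen–Macaulay $R$-modules with degree-preserving morphisms. An arc of the completed $\infty$-gon is a pair $(a,b)$ with $a\in\mathbb{Z}\cup\{-\infty\}$, $b\in\mathbb{Z}$, $a<b$ (with $-\infty$ smaller than every integer). Indecomposables correspond to arcs via $(x,y^k)(j)\leftrightarrow(-j-k,1-j)$ for $k\ge0$, $j\in\mathbb{Z}$ (with $(x,y^0)=R$), and $\mathbb{C}[y](j)=(R/(x))(j)\leftrightarrow(-\infty,-j)$; equivalently a finite arc $(a,b)$ is $(x,y^{b-a-1})(1-b)$ and an infinite arc $(-\infty,b)$ is $\mathbb{C}[y](-b)$. *)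

theory Defs
  imports "HOL-Computational_Algebra.Polynomial" "HOL-Library.Product_Plus"
begin

datatype endpt = NegInf | Fin int

definition is_arc :: "endpt \<Rightarrow> int \<Rightarrow> bool" where
  "is_arc a b = (case a of NegInf \<Rightarrow> True | Fin a' \<Rightarrow> a' < b)"

text \<open>Elements of R = C[x,y]/(x^2): a pair (p,q) of polynomials in y stands for p(y) + x q(y).
  Elements of C[y] = R/(x) are represented as pairs (p,0).\<close>
type_synonym elt = "complex poly \<times> complex poly"

text \<open>Graded modules: Ideal k j = (x,y^k)(j) (with (x,y^0) = R), CY j = C[y](j) = (R/(x))(j).\<close>
datatype gmod = Ideal nat int | CY int

fun gshift :: "gmod \<Rightarrow> int" where
  "gshift (Ideal k j) = j"
| "gshift (CY j) = j"

fun gcarrier :: "gmod \<Rightarrow> elt set" where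
  "gcarrier (Ideal k j) = {(p,q). [:0,1:] ^ k dvd p}"
| "gcarrier (CY j) = {(p,q). q = 0}"

fun xact :: "gmod \<Rightarrow> elt \<Rightarrow> elt" where
  "xact (Ideal k j) (p,q) = (0, p)"
| "xact (CY j) (p,q) = (0, 0)"

definition yact :: "elt \<Rightarrow> elt" where
  "yact = (\<lambda>(p,q). ([:0,1:] * p, [:0,1:] * q))"

definition sc :: "complex \<Rightarrow> elt \<Rightarrow> elt" where
  "sc c = (\<lambda>(p,q). (smult c p, smult c q))"

text \<open>Homogeneous of degree e in R (deg x = 1, deg y = -1): y^i has degree -i, x y^i degree 1-i.\<close>
definition homogR :: "int \<Rightarrow> elt \<Rightarrow> bool" where
  "homogR e = (\<lambda>(p,q). (\<forall>i. coeff p i \<noteq> 0 \<longrightarrow> int i = - e) \<and>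
                       (\<forall>i. coeff q i \<noteq> 0 \<longrightarrow> int i = 1 - e))"

text \<open>Homogeneous elements of degree n of M(j): those of degree j+n of M.\<close>
definition homog :: "gmod \<Rightarrow> int \<Rightarrow> elt \<Rightarrow> bool" where
  "homog M n m = (m \<in> gcarrier M \<and> homogR (gshift M + n) m)"

definition arc_mod :: "endpt \<Rightarrow> int \<Rightarrow> gmod" where
  "arc_mod a b = (case a of NegInf \<Rightarrow> CY (- b) | Fin a' \<Rightarrow> Ideal (nat (b - a' - 1)) (1 - b))"

text \<open>Degree-preserving R-module homomorphisms M \<rightarrow> N (R-linear = C-linear and commuting
  with x and y), taken extensional (zero outside the carrier of M).\<close>
definition ghom :: "gmod \<Rightarrow> gmod \<Rightarrow> (elt \<Rightarrow> elt) set" where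
  "ghom M N = {f.
     (\<forall>m. m \<notin> gcarrier M \<longrightarrow> f m = 0) \<and>
     (\<forall>m\<in>gcarrier M. f m \<in> gcarrier N) \<and>
     (\<forall>m\<in>gcarrier M. \<forall>m'\<in>gcarrier M. f (m + m') = f m + f m') \<and>
     (\<forall>c. \<forall>m\<in>gcarrier M. f (sc c m) = sc c (f m)) \<and>
     (\<forall>m\<in>gcarrier M. f (xact M m) = xact N (f m)) \<and>
     (\<forall>m\<in>gcarrier M. f (yact m) = yact (f m)) \<and>
     (\<forall>n m. homog M n m \<longrightarrow> homog N n (f m))}"

definition lincomb :: "complex list \<Rightarrow> (elt \<Rightarrow> elt) list \<Rightarrow> elt \<Rightarrow> elt" where
  "lincomb cs fs = (\<lambda>m. sum_list (map2 (\<lambda>c f. sc c (f m)) cs fs))"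

definition has_cdim :: "(elt \<Rightarrow> elt) set \<Rightarrow> nat \<Rightarrow> bool" where
  "has_cdim H n = (\<exists>bs. length bs = n \<and>
      (\<forall>cs. length cs = n \<longrightarrow> lincomb cs bs \<in> H) \<and>
      (\<forall>h\<in>H. \<exists>!cs. length cs = n \<and> h = lincomb cs bs))"

end

theory Submission
  imports Defs
begin

text \<open>
  A graded homomorphism out of \<open>(x,y^k)(j)\<close> is determined by the images of the generators
  \<open>y^k\<close> and \<open>x\<close>, and one out of \<open>\<complex>[y](j)\<close> by the image of \<open>1\<close>. Since the graded pieces of
  all these modules are at most one-dimensional over \<open>\<complex>\<close> in each of the two components
  \<open>p(y)\<close> and \<open>x q(y)\<close>, homogeneity forces every generator image to be a scalar multiple of
  one prescribed monomial, and the relation \<open>x \<cdot> y^k = y^k \<cdot> x\<close> determines the image of \<open>x\<close>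
  by that of \<open>y^k\<close>. Hence every homomorphism is a combination of multiplication by \<open>y^(d-b)\<close>
  and of the map sending \<open>y^k\<close> to \<open>x y^(d-a)\<close> (to \<open>y^(d-a)\<close> if the target is \<open>\<complex>[y]\<close>), and
  the dimension counts which of these two maps exist.
\<close>

lemma pCons01_power_eq_monom: "[:0, 1:] ^ n = (monom 1 n :: complex poly)"
  by (simp add: monom_altdef)

lemma monom_dvd_monom: "k \<le> n \<Longrightarrow> monom 1 k dvd (monom 1 n :: complex poly)"
  by (metis pCons01_power_eq_monom le_imp_power_dvd)

lemma smult_cancel_right:
  fixes p :: "'a::idom poly"
  assumes "smult c p = smult c' p" "p \<noteq> 0"
  shows "c = c'"
proof -
  have "smult (c - c') p = 0" using assms(1) by (simp add: smult_diff_left)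
  then show ?thesis using assms(2) by simp
qed

lemma sc_add: "sc c (u + v) = sc c u + sc c v"
  by (cases u; cases v) (simp add: sc_def smult_add_right)

lemma sc_zero [simp]: "sc c 0 = 0"
  by (simp add: sc_def zero_prod_def)

lemma sc_0_left [simp]: "sc 0 u = 0"
  by (cases u) (simp add: sc_def zero_prod_def)

lemma sc_commute: "sc c (sc c' u) = sc c' (sc c u)"
  by (cases u) (simp add: sc_def mult.commute)

lemma sc_cancel: "sc c u = sc c' u \<Longrightarrow> u \<noteq> 0 \<Longrightarrow> c = c'"
  by (cases u) (auto simp: sc_def zero_prod_def intro: smult_cancel_right)

lemma yact_add: "yact (u + v) = yact u + yact v"
  by (cases u; cases v) (simp add: yact_def distrib_left)

lemma yact_sc: "yact (sc c u) = sc c (yact u)"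
  by (cases u) (simp add: yact_def sc_def)

lemma yact_zero [simp]: "yact 0 = 0"
  by (simp add: yact_def zero_prod_def)

lemma xact_zero [simp]: "xact N 0 = 0"
  by (cases N) (auto simp: zero_prod_def)

lemma xact_add: "xact N (u + v) = xact N u + xact N v"
  by (cases N; cases u; cases v) (auto simp: zero_prod_def)

lemma xact_sc: "xact N (sc c u) = sc c (xact N u)"
  by (cases N; cases u) (auto simp: sc_def zero_prod_def)

lemma gcarrier_add: "u \<in> gcarrier N \<Longrightarrow> v \<in> gcarrier N \<Longrightarrow> u + v \<in> gcarrier N"
  by (cases N; cases u; cases v) auto

lemma gcarrier_sc: "u \<in> gcarrier N \<Longrightarrow> sc c u \<in> gcarrier N"
  by (cases N; cases u) (auto simp: sc_def dvd_smult)

lemma gcarrier_zero [simp]: "0 \<in> gcarrier N"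
  by (cases N) (auto simp: zero_prod_def)

lemma gcarrier_xact: "m \<in> gcarrier M \<Longrightarrow> xact M m \<in> gcarrier M"
  by (cases M; cases m) (auto simp: zero_prod_def)

lemma homogR_add: "homogR e u \<Longrightarrow> homogR e v \<Longrightarrow> homogR e (u + v)"
  by (cases u; cases v) (auto simp: homogR_def, metis add.right_neutral, metis add.right_neutral)

lemma homogR_sc: "homogR e u \<Longrightarrow> homogR e (sc c u)"
  by (cases u) (auto simp: homogR_def sc_def)

lemma homog_zero [simp]: "homog N n 0"
  using gcarrier_zero[of N] by (simp add: homog_def homogR_def zero_prod_def)

lemma homog_add: "homog N n u \<Longrightarrow> homog N n v \<Longrightarrow> homog N n (u + v)"
  by (simp add: homog_def gcarrier_add homogR_add)

lemma homog_sc: "homog N n u \<Longrightarrow> homog N n (sc c u)"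
  by (simp add: homog_def gcarrier_sc homogR_sc)

definition polymul :: "complex poly \<Rightarrow> elt \<Rightarrow> elt" where
  "polymul r u = (r * fst u, r * snd u)"

lemma polymul_0: "polymul 0 u = 0"
  by (simp add: polymul_def zero_prod_def)

lemma polymul_pCons: "polymul (pCons c r) u = sc c u + yact (polymul r u)"
  by (cases u) (simp add: polymul_def sc_def yact_def)

lemma polymul_add: "polymul r (u + v) = polymul r u + polymul r v"
  by (simp add: polymul_def distrib_left)

lemma gcarrier_polymul: "m \<in> gcarrier M \<Longrightarrow> polymul r m \<in> gcarrier M"
  by (cases M; cases m) (auto simp: polymul_def dvd_mult)

lemma gcarrier_yact: "m \<in> gcarrier M \<Longrightarrow> yact m \<in> gcarrier M"
  using gcarrier_polymul[of m M "[:0, 1:]"] by (cases m) (simp add: polymul_def yact_def)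

lemma ghom_map_zero: "f \<in> ghom M N \<Longrightarrow> f 0 = 0"
proof -
  assume f: "f \<in> ghom M N"
  have "f (0 + 0) = f 0 + f 0" using f gcarrier_zero[of M] unfolding ghom_def by blast
  then show ?thesis by simp
qed

lemma ghom_addD:
  "f \<in> ghom M N \<Longrightarrow> u \<in> gcarrier M \<Longrightarrow> v \<in> gcarrier M \<Longrightarrow> f (u + v) = f u + f v"
  unfolding ghom_def by blast

lemma ghom_homogD: "f \<in> ghom M N \<Longrightarrow> homog M n m \<Longrightarrow> homog N n (f m)"
  unfolding ghom_def by blast

lemma ghom_xactD: "f \<in> ghom M N \<Longrightarrow> m \<in> gcarrier M \<Longrightarrow> f (xact M m) = xact N (f m)"
  unfolding ghom_def by blast

lemma ghom_outside: "f \<in> ghom M N \<Longrightarrow> m \<notin> gcarrier M \<Longrightarrow> f m = 0"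
  unfolding ghom_def by blast

lemma ghom_carrierD: "f \<in> ghom M N \<Longrightarrow> m \<in> gcarrier M \<Longrightarrow> f m \<in> gcarrier N"
  unfolding ghom_def by blast

lemma ghom_polymul:
  assumes f: "f \<in> ghom M N" and m: "m \<in> gcarrier M"
  shows "f (polymul r m) = polymul r (f m)"
proof (induction r rule: pCons_induct)
  case 0
  then show ?case using ghom_map_zero[OF f] by (simp add: polymul_0)
next
  case (pCons c r)
  have rm: "polymul r m \<in> gcarrier M" using gcarrier_polymul[OF m] .
  have "f (polymul (pCons c r) m) = f (sc c m) + f (yact (polymul r m))"
    unfolding polymul_pCons
    by (rule ghom_addD[OF f gcarrier_sc[OF m] gcarrier_yact[OF rm]])
  also have "\<dots> = sc c (f m) + yact (f (polymul r m))"
    using f m rm unfolding ghom_def by auto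
  also have "\<dots> = polymul (pCons c r) (f m)" using pCons by (simp add: polymul_pCons)
  finally show ?case .
qed

lemma ghom_zero: "(\<lambda>m. 0) \<in> ghom M N"
  by (simp add: ghom_def)

lemma ghom_add: "g \<in> ghom M N \<Longrightarrow> h \<in> ghom M N \<Longrightarrow> (\<lambda>m. g m + h m) \<in> ghom M N"
  unfolding ghom_def by (auto simp: gcarrier_add sc_add xact_add yact_add homog_add add_ac)

lemma ghom_sc: "g \<in> ghom M N \<Longrightarrow> (\<lambda>m. sc c (g m)) \<in> ghom M N"
  unfolding ghom_def by (auto simp: gcarrier_sc sc_add xact_sc yact_sc homog_sc sc_commute)

lemma lincomb_Nil [simp]: "lincomb [] bs = (\<lambda>m. 0)" "lincomb cs [] = (\<lambda>m. 0)"
  by (simp_all add: lincomb_def)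

lemma lincomb_Cons [simp]: "lincomb (c # cs) (b # bs) = (\<lambda>m. sc c (b m) + lincomb cs bs m)"
  by (simp add: lincomb_def)

lemma lincomb_in_ghom: "set bs \<subseteq> ghom M N \<Longrightarrow> lincomb cs bs \<in> ghom M N"
proof (induction bs arbitrary: cs)
  case Nil
  then show ?case by (simp add: ghom_zero)
next
  case (Cons b bs)
  then show ?case
    by (cases cs) (simp_all add: ghom_zero ghom_add ghom_sc)
qed

definition on_carrier :: "gmod \<Rightarrow> (elt \<Rightarrow> elt) \<Rightarrow> elt \<Rightarrow> elt" where
  "on_carrier M F = (\<lambda>m. if m \<in> gcarrier M then F m else 0)"

lemma on_carrier_in_ghomI:
  assumes "\<And>m. m \<in> gcarrier M \<Longrightarrow> F m \<in> gcarrier N"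
    and "\<And>m m'. m \<in> gcarrier M \<Longrightarrow> m' \<in> gcarrier M \<Longrightarrow> F (m + m') = F m + F m'"
    and "\<And>c m. m \<in> gcarrier M \<Longrightarrow> F (sc c m) = sc c (F m)"
    and "\<And>m. m \<in> gcarrier M \<Longrightarrow> F (xact M m) = xact N (F m)"
    and "\<And>m. m \<in> gcarrier M \<Longrightarrow> F (yact m) = yact (F m)"
    and "\<And>n m. homog M n m \<Longrightarrow> homog N n (F m)"
  shows "on_carrier M F \<in> ghom M N"
  using assms unfolding ghom_def on_carrier_def
  by (auto simp: gcarrier_add gcarrier_sc gcarrier_xact gcarrier_yact homog_def)

lemma ghom_eq_on_carrierI:
  assumes "f \<in> ghom M N" "\<And>p q. (p, q) \<in> gcarrier M \<Longrightarrow> f (p, q) = F (p, q)"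
  shows "f = on_carrier M F"
proof
  fix m
  show "f m = on_carrier M F m"
    using assms ghom_outside[OF assms(1)] by (cases m) (simp add: on_carrier_def)
qed

lemma sc_on_carrier: "sc c (on_carrier M F m) = on_carrier M (\<lambda>m. sc c (F m)) m"
  by (simp add: on_carrier_def)

lemma add_on_carrier: "on_carrier M F m + on_carrier M G m = on_carrier M (\<lambda>m. F m + G m) m"
  by (simp add: on_carrier_def)

definition homog_poly :: "int \<Rightarrow> complex poly \<Rightarrow> bool" where
  "homog_poly e p = (\<forall>i. coeff p i \<noteq> 0 \<longrightarrow> int i = e)"

lemma homog_poly_0 [simp]: "homog_poly e 0"
  by (simp add: homog_poly_def)

lemma homog_poly_1: "homog_poly 0 1"
  by (simp add: homog_poly_def coeff_1)

lemma homog_poly_eq_monom: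
  "homog_poly e p \<Longrightarrow> \<exists>c. p = smult c (monom 1 (nat e)) \<and> (e < 0 \<longrightarrow> c = 0)"
  by (rule exI[of _ "if e < 0 then 0 else coeff p (nat e)"])
    (auto simp: homog_poly_def poly_eq_iff coeff_monom)

lemma homog_poly_monom_mult: "homog_poly e p \<Longrightarrow> homog_poly (e + int s) (monom 1 s * p)"
  by (auto simp: homog_poly_def coeff_monom_mult split: if_splits)

lemma homog_poly_div_monom:
  assumes "homog_poly e (monom 1 k * r)"
  shows "homog_poly (e - int k) r"
  unfolding homog_poly_def
proof (intro allI impI)
  fix i assume "coeff r i \<noteq> 0"
  then have "coeff (monom 1 k * r) (i + k) \<noteq> 0" by (simp add: coeff_monom_mult)
  then show "int i = e - int k" using assms unfolding homog_poly_def by force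
qed

lemma homog_poly_monom_dvd_eq_0:
  assumes "homog_poly e p" "monom 1 k dvd p" "e < int k"
  shows "p = 0"
proof -
  obtain r where r: "p = monom 1 k * r" using assms(2) by (auto elim: dvdE)
  have "homog_poly (e - int k) r" using assms(1) r homog_poly_div_monom by blast
  then have "r = 0" using assms(3) by (auto simp: homog_poly_def poly_eq_iff)
  then show ?thesis using r by simp
qed

lemma homog_Ideal_iff:
  "homog (Ideal k j) n (p, q) \<longleftrightarrow>
     monom 1 k dvd p \<and> homog_poly (- (j + n)) p \<and> homog_poly (1 - (j + n)) q"
  by (simp add: homog_def homogR_def homog_poly_def pCons01_power_eq_monom)

lemma homog_CY_iff: "homog (CY j) n (p, q) \<longleftrightarrow> q = 0 \<and> homog_poly (- (j + n)) p"
  by (auto simp: homog_def homogR_def homog_poly_def)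

lemma homog_Ideal_generators:
  "homog (Ideal k j) (- j - int k) (monom 1 k, 0)"
  "homog (Ideal k j) (1 - j) (0, 1)"
  using homog_poly_monom_mult[OF homog_poly_1, of k] by (simp_all add: homog_Ideal_iff homog_poly_1)

lemma homog_CY_generator: "homog (CY j) (- j) (1, 0)"
  by (simp add: homog_CY_iff homog_poly_1)

definition mult_y_pow :: "gmod \<Rightarrow> nat \<Rightarrow> elt \<Rightarrow> elt" where
  "mult_y_pow M s = on_carrier M (polymul (monom 1 s))"

definition gen_to_x :: "gmod \<Rightarrow> nat \<Rightarrow> nat \<Rightarrow> elt \<Rightarrow> elt" where
  "gen_to_x M k e = on_carrier M (\<lambda>(p, q). (0, monom 1 e * (p div monom 1 k)))"

definition gen_to_y :: "gmod \<Rightarrow> nat \<Rightarrow> nat \<Rightarrow> elt \<Rightarrow> elt" where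
  "gen_to_y M k e = on_carrier M (\<lambda>(p, q). (monom 1 e * (p div monom 1 k), 0))"

lemma monom_mult_div_monom:
  "monom 1 k dvd p \<Longrightarrow> (r * p) div monom 1 k = r * (p div (monom 1 k :: complex poly))"
  by (simp add: div_mult_swap)

lemma mult_y_pow_Ideal_in_ghom:
  assumes "k' \<le> k + s" "int s = j - j'"
  shows "mult_y_pow (Ideal k j) s \<in> ghom (Ideal k j) (Ideal k' j')"
  unfolding mult_y_pow_def
proof (rule on_carrier_in_ghomI)
  have dvd: "monom 1 k' dvd monom 1 s * p" if "monom 1 k dvd p" for p :: "complex poly"
  proof -
    from that obtain r where "p = monom 1 k * r" by (rule dvdE)
    then have "monom 1 s * p = monom 1 (k + s) * r"
      by (simp add: mult_monom mult.assoc[symmetric] add.commute)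
    then show ?thesis using monom_dvd_monom[OF assms(1)] by simp
  qed
  show "polymul (monom 1 s) m \<in> gcarrier (Ideal k' j')" if "m \<in> gcarrier (Ideal k j)" for m
    using that dvd by (cases m) (simp add: polymul_def pCons01_power_eq_monom)
  show "homog (Ideal k' j') n (polymul (monom 1 s) m)" if "homog (Ideal k j) n m" for n m
    using that dvd homog_poly_monom_mult[of "- (j + n)" _ s] homog_poly_monom_mult[of "1 - (j + n)" _ s]
      assms(2)
    by (cases m) (simp add: polymul_def homog_Ideal_iff algebra_simps)
qed (auto simp: distrib_left polymul_add polymul_def sc_def mult_smult_right yact_def
    mult.left_commute zero_prod_def)

lemma mult_y_pow_CY_in_ghom:
  assumes "int s = j - j'"
  shows "mult_y_pow (CY j) s \<in> ghom (CY j) (CY j')"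
  unfolding mult_y_pow_def
proof (rule on_carrier_in_ghomI)
  show "homog (CY j') n (polymul (monom 1 s) m)" if "homog (CY j) n m" for n m
    using that homog_poly_monom_mult[of "- (j + n)" _ s] assms
    by (cases m) (simp add: polymul_def homog_CY_iff algebra_simps)
qed (auto simp: distrib_left polymul_add polymul_def sc_def mult_smult_right yact_def
    mult.left_commute zero_prod_def)

lemma gen_to_x_Ideal_in_ghom:
  assumes "int e = 1 - j' + j + int k"
  shows "gen_to_x (Ideal k j) k e \<in> ghom (Ideal k j) (Ideal k' j')"
  unfolding gen_to_x_def
proof (rule on_carrier_in_ghomI)
  show "homog (Ideal k' j') n ((\<lambda>(p, q). (0, monom 1 e * (p div monom 1 k))) m)"
    if "homog (Ideal k j) n m" for n m
  proof -
    obtain p q where m: "m = (p, q)" by (cases m)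
    have dvd: "monom 1 k dvd p" and hom: "homog_poly (- (j + n)) p"
      using that by (simp_all add: m homog_Ideal_iff)
    from dvd obtain r where r: "p = monom 1 k * r" by (rule dvdE)
    with hom have "homog_poly (- (j + n) - k + e) (monom 1 e * r)"
      using homog_poly_div_monom homog_poly_monom_mult by blast
    then show ?thesis using assms r by (simp add: m homog_Ideal_iff algebra_simps)
  qed
  show "(\<lambda>(p, q). (0, monom 1 e * (p div monom 1 k))) (yact m) =
      yact ((\<lambda>(p, q). (0, monom 1 e * (p div monom 1 k))) m)" if "m \<in> gcarrier (Ideal k j)" for m
    using that monom_mult_div_monom[of k _ "[:0, 1:]"]
    by (cases m) (simp add: yact_def pCons01_power_eq_monom mult_pCons_right)
qed (auto simp: poly_div_add_left distrib_left sc_def div_smult_left zero_prod_def)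

lemma gen_to_x_CY_in_ghom:
  assumes "int e = 1 - j' + j"
  shows "gen_to_x (CY j) 0 e \<in> ghom (CY j) (Ideal k' j')"
  unfolding gen_to_x_def
proof (rule on_carrier_in_ghomI)
  show "homog (Ideal k' j') n ((\<lambda>(p, q). (0, monom 1 e * (p div monom 1 0))) m)"
    if "homog (CY j) n m" for n m
    using that homog_poly_monom_mult[of "- (j + n)" _ e] assms
    by (cases m) (simp add: homog_CY_iff homog_Ideal_iff algebra_simps)
qed (auto simp: distrib_left sc_def yact_def mult.left_commute zero_prod_def)

lemma gen_to_y_in_ghom:
  assumes "int e = j - j' + int k"
  shows "gen_to_y (Ideal k j) k e \<in> ghom (Ideal k j) (CY j')"
  unfolding gen_to_y_def
proof (rule on_carrier_in_ghomI)
  show "homog (CY j') n ((\<lambda>(p, q). (monom 1 e * (p div monom 1 k), 0)) m)"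
    if "homog (Ideal k j) n m" for n m
  proof -
    obtain p q where m: "m = (p, q)" by (cases m)
    have dvd: "monom 1 k dvd p" and hom: "homog_poly (- (j + n)) p"
      using that by (simp_all add: m homog_Ideal_iff)
    from dvd obtain r where r: "p = monom 1 k * r" by (rule dvdE)
    with hom have "homog_poly (- (j + n) - k + e) (monom 1 e * r)"
      using homog_poly_div_monom homog_poly_monom_mult by blast
    then show ?thesis using assms r by (simp add: m homog_CY_iff algebra_simps)
  qed
  show "(\<lambda>(p, q). (monom 1 e * (p div monom 1 k), 0)) (yact m) =
      yact ((\<lambda>(p, q). (monom 1 e * (p div monom 1 k), 0)) m)" if "m \<in> gcarrier (Ideal k j)" for m
    using that monom_mult_div_monom[of k _ "[:0, 1:]"]
    by (cases m) (simp add: yact_def pCons01_power_eq_monom mult_pCons_right)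
qed (auto simp: poly_div_add_left distrib_left sc_def div_smult_left zero_prod_def)

subsection \<open>Homomorphisms are determined by the generators\<close>

lemma ghom_Ideal_eq_generators:
  assumes f: "f \<in> ghom (Ideal k j) N" and m: "(p, q) \<in> gcarrier (Ideal k j)"
  shows "f (p, q) = polymul (p div monom 1 k) (f (monom 1 k, 0)) + polymul q (f (0, 1))"
proof -
  have gen1: "(monom 1 k, 0) \<in> gcarrier (Ideal k j)" by (simp add: pCons01_power_eq_monom)
  have gen2: "(0, 1) \<in> gcarrier (Ideal k j)" by simp
  have "(p, q) = polymul (p div monom 1 k) (monom 1 k, 0) + polymul q (0, 1)"
    using m by (simp add: polymul_def pCons01_power_eq_monom)
  then have "f (p, q) = f (polymul (p div monom 1 k) (monom 1 k, 0)) + f (polymul q (0, 1))"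
    using ghom_addD[OF f gcarrier_polymul[OF gen1] gcarrier_polymul[OF gen2]] by metis
  then show ?thesis using ghom_polymul[OF f gen1] ghom_polymul[OF f gen2] by simp
qed

lemma ghom_CY_eq_generator:
  assumes f: "f \<in> ghom (CY j) N" and m: "(p, q) \<in> gcarrier (CY j)"
  shows "f (p, q) = polymul p (f (1, 0))"
proof -
  have "(p, q) = polymul p (1, 0)" using m by (simp add: polymul_def)
  then show ?thesis using ghom_polymul[OF f, of "(1, 0)"] by simp
qed

text \<open>The relation \<open>y^k \<cdot> x = x \<cdot> y^k\<close>, with the generator \<open>x\<close> encoded as \<open>(0, 1)\<close>.\<close>

lemma ghom_Ideal_generator_relation:
  assumes f: "f \<in> ghom (Ideal k j) N"
  shows "polymul (monom 1 k) (f (0, 1)) = xact N (f (monom 1 k, 0))"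
proof -
  have "(monom 1 k, 0) \<in> gcarrier (Ideal k j)" by (simp add: pCons01_power_eq_monom)
  then have "f (xact (Ideal k j) (monom 1 k, 0)) = xact N (f (monom 1 k, 0))"
    by (rule ghom_xactD[OF f])
  moreover have "xact (Ideal k j) (monom 1 k, 0) = polymul (monom 1 k) (0, 1)"
    by (simp add: polymul_def)
  ultimately show ?thesis using ghom_polymul[OF f, of "(0, 1)"] by simp
qed

lemma ghom_CY_CY_eq:
  assumes f: "f \<in> ghom (CY j) (CY j')"
  shows "\<exists>\<delta>. (\<not> j' \<le> j \<longrightarrow> \<delta> = 0) \<and> f = (\<lambda>m. sc \<delta> (mult_y_pow (CY j) (nat (j - j')) m))"
proof -
  obtain U V where f1: "f (1, 0) = (U, V)" by (cases "f (1, 0)")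
  have "homog (CY j') (- j) (U, V)" using ghom_homogD[OF f homog_CY_generator] f1 by simp
  then have V: "V = 0" and U: "homog_poly (j - j') U" by (simp_all add: homog_CY_iff)
  obtain \<delta> where \<delta>: "U = smult \<delta> (monom 1 (nat (j - j')))" "j - j' < 0 \<longrightarrow> \<delta> = 0"
    using homog_poly_eq_monom[OF U] by blast
  have "f = (\<lambda>m. sc \<delta> (mult_y_pow (CY j) (nat (j - j')) m))"
    unfolding mult_y_pow_def sc_on_carrier
    by (rule ghom_eq_on_carrierI[OF f])
      (use ghom_CY_eq_generator[OF f] in \<open>simp add: f1 V \<delta> polymul_def sc_def mult.commute\<close>)
  with \<delta>(2) show ?thesis by (intro exI[of _ \<delta>]) auto
qed

lemma ghom_CY_Ideal_eq:
  assumes f: "f \<in> ghom (CY j) (Ideal k' j')"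
  shows "\<exists>\<delta>. (\<not> 0 \<le> 1 - j' + j \<longrightarrow> \<delta> = 0) \<and>
    f = (\<lambda>m. sc \<delta> (gen_to_x (CY j) 0 (nat (1 - j' + j)) m))"
proof -
  obtain U V where f1: "f (1, 0) = (U, V)" by (cases "f (1, 0)")
  have "homog (Ideal k' j') (- j) (U, V)" using ghom_homogD[OF f homog_CY_generator] f1 by simp
  then have V: "homog_poly (1 - j' + j) V" by (simp add: homog_Ideal_iff algebra_simps)
  have "f (xact (CY j) (1, 0)) = xact (Ideal k' j') (f (1, 0))" by (rule ghom_xactD[OF f]) simp
  then have U: "U = 0" using ghom_map_zero[OF f] f1 by (simp add: zero_prod_def)
  obtain \<delta> where \<delta>: "V = smult \<delta> (monom 1 (nat (1 - j' + j)))" "1 - j' + j < 0 \<longrightarrow> \<delta> = 0"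
    using homog_poly_eq_monom[OF V] by blast
  have "f = (\<lambda>m. sc \<delta> (gen_to_x (CY j) 0 (nat (1 - j' + j)) m))"
    unfolding gen_to_x_def sc_on_carrier
    by (rule ghom_eq_on_carrierI[OF f])
      (use ghom_CY_eq_generator[OF f] in \<open>simp add: f1 U \<delta> polymul_def sc_def mult.commute\<close>)
  with \<delta>(2) show ?thesis by (intro exI[of _ \<delta>]) auto
qed

lemma ghom_Ideal_CY_eq:
  assumes f: "f \<in> ghom (Ideal k j) (CY j')"
  shows "\<exists>\<delta>. (\<not> 0 \<le> j - j' + int k \<longrightarrow> \<delta> = 0) \<and>
    f = (\<lambda>m. sc \<delta> (gen_to_y (Ideal k j) k (nat (j - j' + int k)) m))"
proof -
  obtain U1 V1 where f1: "f (monom 1 k, 0) = (U1, V1)" by (cases "f (monom 1 k, 0)")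
  obtain U2 V2 where f2: "f (0, 1) = (U2, V2)" by (cases "f (0, 1)")
  have "homog (CY j') (- j - int k) (U1, V1)"
    using ghom_homogD[OF f homog_Ideal_generators(1)] f1 by simp
  then have V1: "V1 = 0" and U1: "homog_poly (j - j' + int k) U1"
    by (simp_all add: homog_CY_iff algebra_simps)
  have "(U2, V2) \<in> gcarrier (CY j')" using ghom_carrierD[OF f, of "(0, 1)"] f2 by simp
  then have V2: "V2 = 0" by simp
  have "monom 1 k * U2 = 0"
    using ghom_Ideal_generator_relation[OF f] by (simp add: f1 f2 polymul_def zero_prod_def)
  then have U2: "U2 = 0" by simp
  obtain \<delta> where \<delta>: "U1 = smult \<delta> (monom 1 (nat (j - j' + int k)))" "j - j' + int k < 0 \<longrightarrow> \<delta> = 0"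
    using homog_poly_eq_monom[OF U1] by blast
  have "f = (\<lambda>m. sc \<delta> (gen_to_y (Ideal k j) k (nat (j - j' + int k)) m))"
    unfolding gen_to_y_def sc_on_carrier
    by (rule ghom_eq_on_carrierI[OF f])
      (use ghom_Ideal_eq_generators[OF f] in
        \<open>simp add: f1 f2 U2 V1 V2 \<delta> polymul_def sc_def mult.commute\<close>)
  with \<delta>(2) show ?thesis by (intro exI[of _ \<delta>]) auto
qed

lemma ghom_Ideal_Ideal_generators:
  assumes f: "f \<in> ghom (Ideal k j) (Ideal k' j')"
  obtains \<beta> \<delta> where "\<not> (0 \<le> j - j' \<and> int k' \<le> j - j' + int k) \<Longrightarrow> \<beta> = 0"
    and "\<not> 0 \<le> 1 - j' + j + int k \<Longrightarrow> \<delta> = 0"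
    and "f (0, 1) = (0, smult \<beta> (monom 1 (nat (j - j'))))"
    and "f (monom 1 k, 0) = (monom 1 k * smult \<beta> (monom 1 (nat (j - j'))),
                            smult \<delta> (monom 1 (nat (1 - j' + j + int k))))"
proof -
  obtain U1 V1 where f1: "f (monom 1 k, 0) = (U1, V1)" by (cases "f (monom 1 k, 0)")
  obtain U2 V2 where f2: "f (0, 1) = (U2, V2)" by (cases "f (0, 1)")
  have "homog (Ideal k' j') (- j - int k) (U1, V1)"
    using ghom_homogD[OF f homog_Ideal_generators(1)] f1 by simp
  then have U1_dvd: "monom 1 k' dvd U1" and U1: "homog_poly (j - j' + int k) U1"
    and V1: "homog_poly (1 - j' + j + int k) V1"
    by (simp_all add: homog_Ideal_iff algebra_simps)
  have "homog (Ideal k' j') (1 - j) (U2, V2)"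
    using ghom_homogD[OF f homog_Ideal_generators(2)] f2 by simp
  then have V2: "homog_poly (j - j') V2" by (simp add: homog_Ideal_iff algebra_simps)
  have "f (xact (Ideal k j) (0, 1)) = xact (Ideal k' j') (f (0, 1))" by (rule ghom_xactD[OF f]) simp
  then have U2: "U2 = 0" using ghom_map_zero[OF f] f2 by (simp add: zero_prod_def)
  have U1_eq: "U1 = monom 1 k * V2"
    using ghom_Ideal_generator_relation[OF f] by (simp add: f1 f2 polymul_def)
  obtain \<beta> where \<beta>: "V2 = smult \<beta> (monom 1 (nat (j - j')))" "j - j' < 0 \<longrightarrow> \<beta> = 0"
    using homog_poly_eq_monom[OF V2] by blast
  obtain \<delta> where \<delta>: "V1 = smult \<delta> (monom 1 (nat (1 - j' + j + int k)))"
    "1 - j' + j + int k < 0 \<longrightarrow> \<delta> = 0"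
    using homog_poly_eq_monom[OF V1] by blast
  have "\<beta> = 0" if "j - j' + int k < int k'"
  proof -
    have "monom 1 k * V2 = 0"
      using homog_poly_monom_dvd_eq_0[OF U1 U1_dvd that] U1_eq by simp
    then show ?thesis using \<beta>(1) by simp
  qed
  with \<beta> \<delta> show ?thesis
    using that[of \<beta> \<delta>] by (auto simp: f1 f2 U1_eq U2)
qed

lemma ghom_Ideal_Ideal_eq:
  assumes f: "f \<in> ghom (Ideal k j) (Ideal k' j')"
  shows "\<exists>\<beta> \<delta>. (\<not> (0 \<le> j - j' \<and> int k' \<le> j - j' + int k) \<longrightarrow> \<beta> = 0) \<and>
    (\<not> 0 \<le> 1 - j' + j + int k \<longrightarrow> \<delta> = 0) \<and>
    f = (\<lambda>m. sc \<beta> (mult_y_pow (Ideal k j) (nat (j - j')) m) +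
              sc \<delta> (gen_to_x (Ideal k j) k (nat (1 - j' + j + int k)) m))"
proof -
  obtain \<beta> \<delta> where \<beta>: "\<not> (0 \<le> j - j' \<and> int k' \<le> j - j' + int k) \<Longrightarrow> \<beta> = 0"
    and \<delta>: "\<not> 0 \<le> 1 - j' + j + int k \<Longrightarrow> \<delta> = 0"
    and f_x: "f (0, 1) = (0, smult \<beta> (monom 1 (nat (j - j'))))"
    and f_y: "f (monom 1 k, 0) = (monom 1 k * smult \<beta> (monom 1 (nat (j - j'))),
                                 smult \<delta> (monom 1 (nat (1 - j' + j + int k))))"
    using ghom_Ideal_Ideal_generators[OF f] by blast
  have "f = (\<lambda>m. sc \<beta> (mult_y_pow (Ideal k j) (nat (j - j')) m) +
              sc \<delta> (gen_to_x (Ideal k j) k (nat (1 - j' + j + int k)) m))"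
    unfolding mult_y_pow_def gen_to_x_def sc_on_carrier add_on_carrier
  proof (rule ghom_eq_on_carrierI[OF f])
    fix p q assume pq: "(p, q) \<in> gcarrier (Ideal k j)"
    then have "monom 1 k dvd p" by (simp add: pCons01_power_eq_monom)
    then obtain r where r: "p = monom 1 k * r" by (rule dvdE)
    show "f (p, q) = sc \<beta> (polymul (monom 1 (nat (j - j'))) (p, q)) +
        sc \<delta> (case (p, q) of (p, q) \<Rightarrow> (0, monom 1 (nat (1 - j' + j + int k)) * (p div monom 1 k)))"
      using ghom_Ideal_eq_generators[OF f pq]
      by (simp add: f_x f_y r polymul_def sc_def algebra_simps)
  qed
  with \<beta> \<delta> show ?thesis by (intro exI[of _ \<beta>] exI[of _ \<delta>]) auto
qed

subsection \<open>Counting dimensions\<close>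

lemma has_cdim_ghomI:
  assumes basis: "set bs \<subseteq> ghom M N"
    and span: "\<And>h. h \<in> ghom M N \<Longrightarrow> \<exists>cs. length cs = length bs \<and> h = lincomb cs bs"
    and indep: "\<And>cs cs'. length cs = length bs \<Longrightarrow> length cs' = length bs \<Longrightarrow>
      lincomb cs bs gen = lincomb cs' bs gen \<Longrightarrow> cs = cs'"
  shows "has_cdim (ghom M N) (length bs)"
  unfolding has_cdim_def
proof (rule exI[of _ bs], intro conjI allI impI ballI)
  show "lincomb cs bs \<in> ghom M N" for cs
    using lincomb_in_ghom[OF basis] .
  show "\<exists>!cs. length cs = length bs \<and> h = lincomb cs bs" if "h \<in> ghom M N" for h
    using span[OF that] indep by metis
qed simp

lemma has_cdim_ghom_single:
  assumes g: "P \<Longrightarrow> g \<in> ghom M N"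
    and span: "\<And>h. h \<in> ghom M N \<Longrightarrow> \<exists>\<delta>. (\<not> P \<longrightarrow> \<delta> = 0) \<and> h = (\<lambda>m. sc \<delta> (g m))"
    and nonzero: "P \<Longrightarrow> g gen \<noteq> 0"
  shows "has_cdim (ghom M N) (of_bool P)"
proof (cases P)
  case True
  have "has_cdim (ghom M N) (length [g])"
  proof (rule has_cdim_ghomI[where gen = gen])
    show "set [g] \<subseteq> ghom M N" using g True by simp
    show "\<exists>cs. length cs = length [g] \<and> h = lincomb cs [g]" if h: "h \<in> ghom M N" for h
    proof -
      obtain \<delta> where "h = (\<lambda>m. sc \<delta> (g m))" using span[OF h] by blast
      then show ?thesis by (intro exI[of _ "[\<delta>]"]) simp
    qed
    show "cs = cs'" if len: "length cs = length [g]" "length cs' = length [g]"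
      and eq: "lincomb cs [g] gen = lincomb cs' [g] gen" for cs cs'
    proof -
      obtain c c' where "cs = [c]" "cs' = [c']" using len by (auto simp: length_Suc_conv)
      with eq have "sc c (g gen) = sc c' (g gen)" by simp
      then show ?thesis using sc_cancel nonzero[OF True] \<open>cs = [c]\<close> \<open>cs' = [c']\<close> by blast
    qed
  qed
  then show ?thesis using True by simp
next
  case False
  have "has_cdim (ghom M N) (length ([] :: (elt \<Rightarrow> elt) list))"
    by (rule has_cdim_ghomI[where gen = gen]) (use span False in auto)
  then show ?thesis using False by simp
qed

text \<open>The two spanning maps take values in the two different components \<open>p(y)\<close> and \<open>x q(y)\<close>
  at \<open>gen\<close>, which makes them linearly independent.\<close>

lemma has_cdim_ghom_pair:
  assumes g1: "P1 \<Longrightarrow> g1 \<in> ghom M N" and g2: "P2 \<Longrightarrow> g2 \<in> ghom M N" and "P1 \<Longrightarrow> P2"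
    and span: "\<And>h. h \<in> ghom M N \<Longrightarrow> \<exists>\<beta> \<delta>. (\<not> P1 \<longrightarrow> \<beta> = 0) \<and> (\<not> P2 \<longrightarrow> \<delta> = 0) \<and>
      h = (\<lambda>m. sc \<beta> (g1 m) + sc \<delta> (g2 m))"
    and g1_gen: "g1 gen = (U, 0)" "U \<noteq> 0" and g2_gen: "g2 gen = (0, V)" "V \<noteq> 0"
  shows "has_cdim (ghom M N) (of_bool P1 + of_bool P2)"
proof (cases P1)
  case True
  have "has_cdim (ghom M N) (length [g1, g2])"
  proof (rule has_cdim_ghomI[where gen = gen])
    show "set [g1, g2] \<subseteq> ghom M N" using g1 g2 True \<open>P1 \<Longrightarrow> P2\<close> by simp
    show "\<exists>cs. length cs = length [g1, g2] \<and> h = lincomb cs [g1, g2]" if h: "h \<in> ghom M N" for h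
    proof -
      obtain \<beta> \<delta> where "h = (\<lambda>m. sc \<beta> (g1 m) + sc \<delta> (g2 m))" using span[OF h] by blast
      then show ?thesis by (intro exI[of _ "[\<beta>, \<delta>]"]) simp
    qed
    show "cs = cs'" if len: "length cs = length [g1, g2]" "length cs' = length [g1, g2]"
      and eq: "lincomb cs [g1, g2] gen = lincomb cs' [g1, g2] gen" for cs cs'
    proof -
      obtain c1 c2 c1' c2' where cs: "cs = [c1, c2]" "cs' = [c1', c2']"
        using len by (auto simp: length_Suc_conv numeral_2_eq_2)
      with eq have "smult c1 U = smult c1' U" "smult c2 V = smult c2' V"
        by (simp_all add: g1_gen g2_gen sc_def)
      then show ?thesis using cs smult_cancel_right g1_gen(2) g2_gen(2) by blast
    qed
  qed
  then show ?thesis using True \<open>P1 \<Longrightarrow> P2\<close> by simp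
next
  case False
  have "has_cdim (ghom M N) (of_bool P2)"
  proof (rule has_cdim_ghom_single[OF g2])
    show "\<exists>\<delta>. (\<not> P2 \<longrightarrow> \<delta> = 0) \<and> h = (\<lambda>m. sc \<delta> (g2 m))" if "h \<in> ghom M N" for h
      using span[OF that] False by auto
    show "g2 gen \<noteq> 0" using g2_gen by (simp add: zero_prod_def)
  qed
  then show ?thesis using False by simp
qed

lemma has_cdim_ghom_CY_CY: "has_cdim (ghom (CY j) (CY j')) (of_bool (j' \<le> j))"
proof (rule has_cdim_ghom_single[where gen = "(1, 0)"])
  show "mult_y_pow (CY j) (nat (j - j')) \<in> ghom (CY j) (CY j')" if "j' \<le> j"
    by (rule mult_y_pow_CY_in_ghom) (use that in simp)
  show "\<exists>\<delta>. (\<not> j' \<le> j \<longrightarrow> \<delta> = 0) \<and> h = (\<lambda>m. sc \<delta> (mult_y_pow (CY j) (nat (j - j')) m))"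
    if "h \<in> ghom (CY j) (CY j')" for h
    using ghom_CY_CY_eq[OF that] .
  show "mult_y_pow (CY j) (nat (j - j')) (1, 0) \<noteq> 0"
    by (simp add: mult_y_pow_def on_carrier_def polymul_def zero_prod_def)
qed

lemma has_cdim_ghom_CY_Ideal:
  "has_cdim (ghom (CY j) (Ideal k' j')) (of_bool (0 \<le> 1 - j' + j))"
proof (rule has_cdim_ghom_single[where gen = "(1, 0)"])
  show "gen_to_x (CY j) 0 (nat (1 - j' + j)) \<in> ghom (CY j) (Ideal k' j')" if "0 \<le> 1 - j' + j"
    by (rule gen_to_x_CY_in_ghom) (use that in simp)
  show "\<exists>\<delta>. (\<not> 0 \<le> 1 - j' + j \<longrightarrow> \<delta> = 0) \<and>
      h = (\<lambda>m. sc \<delta> (gen_to_x (CY j) 0 (nat (1 - j' + j)) m))"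
    if "h \<in> ghom (CY j) (Ideal k' j')" for h
    using ghom_CY_Ideal_eq[OF that] .
  show "gen_to_x (CY j) 0 (nat (1 - j' + j)) (1, 0) \<noteq> 0"
    by (simp add: gen_to_x_def on_carrier_def zero_prod_def)
qed

lemma has_cdim_ghom_Ideal_CY:
  "has_cdim (ghom (Ideal k j) (CY j')) (of_bool (0 \<le> j - j' + int k))"
proof (rule has_cdim_ghom_single[where gen = "(monom 1 k, 0)"])
  show "gen_to_y (Ideal k j) k (nat (j - j' + int k)) \<in> ghom (Ideal k j) (CY j')"
    if "0 \<le> j - j' + int k"
    by (rule gen_to_y_in_ghom) (use that in simp)
  show "\<exists>\<delta>. (\<not> 0 \<le> j - j' + int k \<longrightarrow> \<delta> = 0) \<and>
      h = (\<lambda>m. sc \<delta> (gen_to_y (Ideal k j) k (nat (j - j' + int k)) m))"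
    if "h \<in> ghom (Ideal k j) (CY j')" for h
    using ghom_Ideal_CY_eq[OF that] .
  show "gen_to_y (Ideal k j) k (nat (j - j' + int k)) (monom 1 k, 0) \<noteq> 0"
    by (simp add: gen_to_y_def on_carrier_def pCons01_power_eq_monom zero_prod_def)
qed

lemma has_cdim_ghom_Ideal_Ideal:
  "has_cdim (ghom (Ideal k j) (Ideal k' j'))
     (of_bool (0 \<le> j - j' \<and> int k' \<le> j - j' + int k) + of_bool (0 \<le> 1 - j' + j + int k))"
proof (rule has_cdim_ghom_pair[where gen = "(monom 1 k, 0)"
      and U = "monom 1 (nat (j - j')) * monom 1 k" and V = "monom 1 (nat (1 - j' + j + int k))"])
  show "mult_y_pow (Ideal k j) (nat (j - j')) \<in> ghom (Ideal k j) (Ideal k' j')"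
    if "0 \<le> j - j' \<and> int k' \<le> j - j' + int k"
    by (rule mult_y_pow_Ideal_in_ghom) (use that in auto)
  show "gen_to_x (Ideal k j) k (nat (1 - j' + j + int k)) \<in> ghom (Ideal k j) (Ideal k' j')"
    if "0 \<le> 1 - j' + j + int k"
    by (rule gen_to_x_Ideal_in_ghom) (use that in simp)
  show "0 \<le> 1 - j' + j + int k" if "0 \<le> j - j' \<and> int k' \<le> j - j' + int k"
    using that by linarith
  show "\<exists>\<beta> \<delta>. (\<not> (0 \<le> j - j' \<and> int k' \<le> j - j' + int k) \<longrightarrow> \<beta> = 0) \<and>
      (\<not> 0 \<le> 1 - j' + j + int k \<longrightarrow> \<delta> = 0) \<and>
      h = (\<lambda>m. sc \<beta> (mult_y_pow (Ideal k j) (nat (j - j')) m) +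
                sc \<delta> (gen_to_x (Ideal k j) k (nat (1 - j' + j + int k)) m))"
    if "h \<in> ghom (Ideal k j) (Ideal k' j')" for h
    using ghom_Ideal_Ideal_eq[OF that] .
qed (simp_all add: mult_y_pow_def gen_to_x_def on_carrier_def polymul_def pCons01_power_eq_monom
    mult_monom)

theorem proposition4p3:
  fixes a c :: endpt and b d :: int
  assumes "is_arc a b" and "is_arc c d"
  shows "has_cdim (ghom (arc_mod a b) (arc_mod c d))
           (if (\<exists>a' c'. a = Fin a' \<and> c = Fin c' \<and> a' \<le> c') \<and> b \<le> d then 2
            else if a = NegInf \<and> d < b then 0
            else if (\<exists>a'. a = Fin a' \<and> d < a') then 0
            else 1)"
proof (cases a; cases c)
  assume "a = NegInf" "c = NegInf"
  then show ?thesis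
    using has_cdim_ghom_CY_CY[of "- b" "- d"]
    by (auto simp: arc_mod_def of_bool_def split: if_splits)
next
  fix c' assume "a = NegInf" "c = Fin c'"
  then show ?thesis
    using has_cdim_ghom_CY_Ideal[of "- b" "nat (d - c' - 1)" "1 - d"]
    by (auto simp: arc_mod_def of_bool_def split: if_splits)
next
  fix a' assume "a = Fin a'" "c = NegInf"
  then show ?thesis
    using has_cdim_ghom_Ideal_CY[of "nat (b - a' - 1)" "1 - b" "- d"] assms
    by (auto simp: arc_mod_def is_arc_def of_bool_def split: if_splits)
next
  fix a' c' assume "a = Fin a'" "c = Fin c'"
  then show ?thesis
    using has_cdim_ghom_Ideal_Ideal[of "nat (b - a' - 1)" "1 - b" "nat (d - c' - 1)" "1 - d"] assms
    by (auto simp: arc_mod_def is_arc_def of_bool_def numeral_2_eq_2 split: if_splits)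
qed

end
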